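(* Let $k\ge1$, $\beta\ge1$ integers, and consider weighted $k$-server on a uniform metric space $S$ with $n_{k-1}+1$ points and server weights $1,\beta,\ldots,\beta^{k-1}$, from an arbitrary initial configuration. Then the expected optimal (offline) cost of serving the random request sequence generated by $\mathsf{adversary}(k)$ is at most $\beta^{k-1}+\big((n_{k-1}+1)\cdot H(n_{k-1}+1)-1\big)\cdot c_{k-1}$, where $c_0=0$ and $c_\ell=\beta^{\ell-1}+\beta\cdot(\lceil n_{\ell-1}/2\rceil+1)\cdot c_{\ell-1}$ for $\ell>0$.
   Context: $H(n)=\sum_{i=1}^n1/i$. The sequence $n_0,n_1,\ldots$ is defined by $n_0=1$ and $n_i=\left(\lceil n_{i-1}/2\rceil+1\right)\left(\lfloor n_{i-1}/2\rfloor+1\right)$ for $i>0$. Weighted $k$-server on a uniform metric: $k$ servers with given weights sit at points; each requested point must be occupied by a server after serving it; moving a server of weight $w$ to a different point costs $w$; the optimal offline cost is the minimum cost of serving the whole (known) sequence. For every $\ell\ge1$ and every set $P$ with $|P|=n_\ell$, fix a set system $\mathcal{Q}(\ell,P)\subseteq 2^P$ consisting of $\lceil n_{\ell-1}/2\rceil+1$ sets each of size $n_{\ell-1}$, such that every $p\in P$ is missed by some set of $\mathcal{Q}(\ell,P)$, and for every $p\in P$ there is $q\in P$ with every set of $\mathcal{Q}(\ell,P)$ containing $p$ or $q$ (such systems exist). The procedure $\mathsf{strategy}(\ell,P)$ (with $|P|=n_\ell$) is: if $\ell=0$, request the unique point of $P$; if $\ell>0$, repeat $\beta\cdot(\lceil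 n_{\ell-1}/2\rceil+1)$ times: pick $P'$ uniformly at random from $\mathcal{Q}(\ell,P)$, independently of all previous random choices, and run $\mathsf{strategy}(\ell-1,P')$. The procedure $\mathsf{adversary}(k)$ on $S$ ($|S|=n_{k-1}+1$, all points initially unmarked) is: repeatedly pick a point $p$ uniformly at random from $S$ (independently) and mark it; if some point of $S$ is still unmarked, run $\mathsf{strategy}(k-1,S\setminus\{p\})$ and continue; otherwise stop. *)

theory Defs
  imports "HOL-Probability.Probability"
begin

fun nseq :: "nat \<Rightarrow> nat" where
  "nseq 0 = 1"
| "nseq (Suc i) = ((nseq i + 1) div 2 + 1) * (nseq i div 2 + 1)"

fun cseq :: "nat \<Rightarrow> nat \<Rightarrow> real" where
  "cseq \<beta> 0 = 0"
| "cseq \<beta> (Suc l) = real \<beta> ^ l + real \<beta> * real ((nseq l + 1) div 2 + 1) * cseq \<beta> l"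

(* weighted k-server on the uniform metric on S; servers 0..<k with weights w i.
   A configuration is a map from server indices to points (only i < k matters). *)
definition move_cost :: "nat \<Rightarrow> (nat \<Rightarrow> real) \<Rightarrow> (nat \<Rightarrow> 'a) \<Rightarrow> (nat \<Rightarrow> 'a) \<Rightarrow> real" where
  "move_cost k w c c' = (\<Sum>i<k. if c i = c' i then 0 else w i)"

fun path_cost :: "nat \<Rightarrow> (nat \<Rightarrow> real) \<Rightarrow> (nat \<Rightarrow> 'a) \<Rightarrow> (nat \<Rightarrow> 'a) list \<Rightarrow> real" where
  "path_cost k w c0 [] = 0"
| "path_cost k w c0 (c # cs) = move_cost k w c0 c + path_cost k w c cs"

definition valid_schedule :: "nat \<Rightarrow> 'a set \<Rightarrow> 'a list \<Rightarrow> (nat \<Rightarrow> 'a) list \<Rightarrow> bool" where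
  "valid_schedule k S rs cs \<longleftrightarrow> length cs = length rs \<and>
     (\<forall>j < length rs. (\<forall>i<k. (cs ! j) i \<in> S) \<and> (\<exists>i<k. (cs ! j) i = rs ! j))"

definition wks_opt :: "nat \<Rightarrow> (nat \<Rightarrow> real) \<Rightarrow> 'a set \<Rightarrow> (nat \<Rightarrow> 'a) \<Rightarrow> 'a list \<Rightarrow> real" where
  "wks_opt k w S c0 rs = Inf {path_cost k w c0 cs | cs. valid_schedule k S rs cs}"

fun rep_pmf :: "nat \<Rightarrow> 'a list pmf \<Rightarrow> 'a list pmf" where
  "rep_pmf 0 D = return_pmf []"
| "rep_pmf (Suc m) D = bind_pmf D (\<lambda>x. map_pmf (\<lambda>y. x @ y) (rep_pmf m D))"

definition set_systems_ok :: "(nat \<Rightarrow> 'a set \<Rightarrow> 'a set set) \<Rightarrow> bool" where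
  "set_systems_ok Q \<longleftrightarrow> (\<forall>l\<ge>1. \<forall>P. finite P \<and> card P = nseq l \<longrightarrow>
      Q l P \<subseteq> Pow P \<and>
      card (Q l P) = (nseq (l - 1) + 1) div 2 + 1 \<and>
      (\<forall>A\<in>Q l P. card A = nseq (l - 1)) \<and>
      (\<forall>p\<in>P. \<exists>A\<in>Q l P. p \<notin> A) \<and>
      (\<forall>p\<in>P. \<exists>q\<in>P. \<forall>A\<in>Q l P. p \<in> A \<or> q \<in> A))"

primrec strategy :: "nat \<Rightarrow> (nat \<Rightarrow> 'a set \<Rightarrow> 'a set set) \<Rightarrow> nat \<Rightarrow> 'a set \<Rightarrow> 'a list pmf" where
  "strategy \<beta> Q 0 P = return_pmf [the_elem P]"
| "strategy \<beta> Q (Suc l) P =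
     rep_pmf (\<beta> * ((nseq l + 1) div 2 + 1))
       (bind_pmf (pmf_of_set (Q (Suc l) P)) (\<lambda>P'. strategy \<beta> Q l P'))"

definition adv_round :: "nat \<Rightarrow> (nat \<Rightarrow> 'a set \<Rightarrow> 'a set set) \<Rightarrow> nat \<Rightarrow> 'a set \<Rightarrow> ('a \<times> 'a list) pmf" where
  "adv_round \<beta> Q k S = bind_pmf (pmf_of_set S)
     (\<lambda>p. map_pmf (\<lambda>\<sigma>. (p, \<sigma>)) (strategy \<beta> Q (k - 1) (S - {p})))"

(* the round (0-based) in which the last unmarked point gets marked *)
definition adv_stop :: "'a set \<Rightarrow> ('a \<times> 'a list) stream \<Rightarrow> nat" where
  "adv_stop S \<omega> = (LEAST t. S \<subseteq> (\<lambda>j. fst (\<omega> !! j)) ` {..t})"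

(* requests issued: strategy runs of all rounds before the stopping round *)
definition adv_requests :: "'a set \<Rightarrow> ('a \<times> 'a list) stream \<Rightarrow> 'a list" where
  "adv_requests S \<omega> = concat (map (\<lambda>j. snd (\<omega> !! j)) [0..<adv_stop S \<omega>])"

end

theory Submission
  imports Defs
begin

(*
  Some point q of S stays unmarked while the adversary runs, since it stops once all points are
  marked. Parking the heaviest server on q costs beta to the power k-1, and afterwards every round
  is a run of strategy(k-1, P) with q in P. By induction on l, a run of strategy(l, P) can be
  served at cost c(l) from any configuration in which a server of index at least l occupies a
  point p of P, without moving the servers of index at least l: move server l-1 to the point
  paired with p by Q(l, P), at cost beta to the power l-1; then every set of Q(l, P) contains a
  point occupied by a server of index at least l-1, so each of the beta (ceil(n(l-1)/2)+1)
  subruns costs c(l-1). The number of rounds is one less than the coupon collector time for the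
  N = n(k-1)+1 points of S, whose expectation N H(N) follows from the recursion
  E(r) = N/r + E(r-1) over the number r of unmarked points.
*)

lemma path_cost_append:
  "path_cost k w c (cs1 @ cs2) = path_cost k w c cs1 + path_cost k w (last (c # cs1)) cs2"
  by (induction cs1 arbitrary: c) auto

lemma valid_schedule_append:
  assumes "valid_schedule k S rs1 cs1" "valid_schedule k S rs2 cs2"
  shows "valid_schedule k S (rs1 @ rs2) (cs1 @ cs2)"
  using assms unfolding valid_schedule_def by (auto simp: nth_append)

lemma valid_schedule_last_in:
  assumes "valid_schedule k S rs cs" "\<forall>i<k. c i \<in> S" "i < k"
  shows "last (c # cs) i \<in> S"
proof (cases "cs = []")
  case False
  have len: "length cs = length rs"
    using assms(1) unfolding valid_schedule_def by simp
  from False have "last (c # cs) = cs ! (length cs - 1)" "length cs - 1 < length cs"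
    by (auto simp: last_conv_nth)
  then show ?thesis using assms len unfolding valid_schedule_def by simp
qed (use assms in simp)

lemma move_cost_nonneg:
  assumes "\<And>i. w i \<ge> 0"
  shows "move_cost k w c c' \<ge> 0"
  unfolding move_cost_def using assms by (intro sum_nonneg) auto

lemma path_cost_nonneg:
  assumes "\<And>i. w i \<ge> 0"
  shows "path_cost k w c cs \<ge> 0"
  by (induction cs arbitrary: c) (auto intro!: add_nonneg_nonneg move_cost_nonneg assms)

lemma move_cost_triangle:
  assumes "\<And>i. w i \<ge> 0"
  shows "move_cost k w c c'' \<le> move_cost k w c c' + move_cost k w c' c''"
  unfolding move_cost_def sum.distrib[symmetric] using assms by (intro sum_mono) auto

lemma path_cost_le_detour:
  assumes "\<And>i. w i \<ge> 0"
  shows "path_cost k w c cs \<le> move_cost k w c c' + path_cost k w c' cs"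
proof (cases cs)
  case Nil
  then show ?thesis using move_cost_nonneg[OF assms] by simp
next
  case (Cons c'' cs')
  then show ?thesis using move_cost_triangle[of w k c c'' c'] assms by simp
qed

lemma move_cost_fun_upd_le:
  assumes "\<And>i. w i \<ge> 0"
  shows "move_cost k w c (c(l := p)) \<le> w l"
proof -
  have "move_cost k w c (c(l := p)) \<le> (\<Sum>i<k. if i = l then w l else 0)"
    unfolding move_cost_def using assms by (intro sum_mono) auto
  also have "\<dots> \<le> w l"
    using assms by (simp add: sum.delta)
  finally show ?thesis .
qed

definition serves_within ::
    "nat \<Rightarrow> (nat \<Rightarrow> real) \<Rightarrow> 'a set \<Rightarrow> ((nat \<Rightarrow> 'a) \<Rightarrow> bool) \<Rightarrow> 'a list \<Rightarrow> real \<Rightarrow> bool" where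
  "serves_within k w S I rs C \<longleftrightarrow> (\<forall>c. (\<forall>i<k. c i \<in> S) \<longrightarrow> I c \<longrightarrow>
     (\<exists>cs. valid_schedule k S rs cs \<and> path_cost k w c cs \<le> C \<and> I (last (c # cs))))"

lemma serves_within_Nil: "serves_within k w S I [] 0"
  unfolding serves_within_def valid_schedule_def by auto

lemma serves_within_append:
  assumes "serves_within k w S I rs1 C1" "serves_within k w S I rs2 C2"
  shows "serves_within k w S I (rs1 @ rs2) (C1 + C2)"
  unfolding serves_within_def
proof (intro allI impI)
  fix c
  assume cS: "\<forall>i<k. c i \<in> S" and "I c"
  then obtain cs1 where cs1: "valid_schedule k S rs1 cs1" "path_cost k w c cs1 \<le> C1"
      "I (last (c # cs1))"
    using assms(1) unfolding serves_within_def by blast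
  moreover have "\<forall>i<k. last (c # cs1) i \<in> S"
    using valid_schedule_last_in[OF cs1(1) cS] by blast
  ultimately obtain cs2 where "valid_schedule k S rs2 cs2"
      "path_cost k w (last (c # cs1)) cs2 \<le> C2" "I (last (last (c # cs1) # cs2))"
    using assms(2) unfolding serves_within_def by blast
  with cs1 show "\<exists>cs. valid_schedule k S (rs1 @ rs2) cs \<and> path_cost k w c cs \<le> C1 + C2
      \<and> I (last (c # cs))"
    by (intro exI[of _ "cs1 @ cs2"]) (auto simp: valid_schedule_append path_cost_append last_append)
qed

lemma serves_within_concat:
  assumes "\<forall>rs\<in>set rss. serves_within k w S I rs C"
  shows "serves_within k w S I (concat rss) (real (length rss) * C)"
  using assms
  by (induction rss) (auto simp: serves_within_Nil algebra_simps dest: serves_within_append)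

lemma serves_within_move_first:
  assumes "serves_within k w S J rs C" and "\<And>i. w i \<ge> 0"
    and "\<And>c. \<forall>i<k. c i \<in> S \<Longrightarrow> I c \<Longrightarrow>
          \<exists>c'. (\<forall>i<k. c' i \<in> S) \<and> J c' \<and> move_cost k w c c' \<le> M"
    and "\<And>c. J c \<Longrightarrow> I c"
  shows "serves_within k w S I rs (M + C)"
  unfolding serves_within_def
proof (intro allI impI)
  fix c
  assume "\<forall>i<k. c i \<in> S" "I c"
  then obtain c' where c': "\<forall>i<k. c' i \<in> S" "J c'" "move_cost k w c c' \<le> M"
    using assms(3) by blast
  then obtain cs where cs: "valid_schedule k S rs cs" "path_cost k w c' cs \<le> C" "J (last (c' # cs))"
    using assms(1) unfolding serves_within_def by blast
  have "path_cost k w c cs \<le> M + C"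
    using path_cost_le_detour[of w k c cs c'] assms(2) c'(3) cs(2) by fastforce
  then show "\<exists>cs. valid_schedule k S rs cs \<and> path_cost k w c cs \<le> M + C \<and> I (last (c # cs))"
    using cs assms(4) \<open>I c\<close> by (intro exI[of _ cs]) (auto simp: last.simps split: if_splits)
qed

lemma wks_opt_le_serves_within:
  assumes "\<And>i. w i \<ge> 0" and "serves_within k w S I rs C" and "\<forall>i<k. c i \<in> S" and "I c"
  shows "wks_opt k w S c rs \<le> C"
proof -
  obtain cs where cs: "valid_schedule k S rs cs" "path_cost k w c cs \<le> C"
    using assms(2-4) unfolding serves_within_def by blast
  have "wks_opt k w S c rs \<le> path_cost k w c cs"
    unfolding wks_opt_def
    using cs(1) path_cost_nonneg[OF assms(1)] by (intro cInf_lower bdd_belowI[of _ 0]) auto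
  with cs(2) show ?thesis by linarith
qed

lemma set_pmf_rep_pmf:
  "rs \<in> set_pmf (rep_pmf m D) \<Longrightarrow> \<exists>rss. length rss = m \<and> set rss \<subseteq> set_pmf D \<and> rs = concat rss"
proof (induction m arbitrary: rs)
  case (Suc m)
  then obtain rs1 rss where "rs1 \<in> set_pmf D" "length rss = m" "set rss \<subseteq> set_pmf D"
      "rs = rs1 @ concat rss"
    by force
  then show ?case by (intro exI[of _ "rs1 # rss"]) auto
qed simp

lemma set_systems_okD:
  assumes "set_systems_ok Q" and "finite P" and "card P = nseq (Suc l)"
  shows "Q (Suc l) P \<subseteq> Pow P" and "finite (Q (Suc l) P)" and "Q (Suc l) P \<noteq> {}"
    and "\<forall>A\<in>Q (Suc l) P. card A = nseq l"
    and "\<forall>p\<in>P. \<exists>q\<in>P. \<forall>A\<in>Q (Suc l) P. p \<in> A \<or> q \<in> A"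
proof -
  have "card (Q (Suc l) P) = (nseq l + 1) div 2 + 1"
    using assms unfolding set_systems_ok_def by (auto dest!: spec[of _ "Suc l"])
  then show "finite (Q (Suc l) P)" and "Q (Suc l) P \<noteq> {}"
    by (auto intro: card_ge_0_finite)
  show "Q (Suc l) P \<subseteq> Pow P" and "\<forall>A\<in>Q (Suc l) P. card A = nseq l"
    and "\<forall>p\<in>P. \<exists>q\<in>P. \<forall>A\<in>Q (Suc l) P. p \<in> A \<or> q \<in> A"
    using assms unfolding set_systems_ok_def by (auto dest!: spec[of _ "Suc l"])
qed

lemma serves_within_park:
  assumes "serves_within k w S (\<lambda>c. \<forall>j\<in>{l..<k}. c j = (f(l := q)) j) rs C"
    and "\<And>i. w i \<ge> 0" and "q \<in> S"
  shows "serves_within k w S (\<lambda>c. \<forall>j\<in>{Suc l..<k}. c j = f j) rs (w l + C)"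
  using assms(1,2)
proof (rule serves_within_move_first)
  fix c :: "nat \<Rightarrow> _"
  assume "\<forall>i<k. c i \<in> S" "\<forall>j\<in>{Suc l..<k}. c j = f j"
  then show "\<exists>c'. (\<forall>i<k. c' i \<in> S) \<and> (\<forall>j\<in>{l..<k}. c' j = (f(l := q)) j) \<and> move_cost k w c c' \<le> w l"
    using assms(3) move_cost_fun_upd_le[of w k c l q] assms(2)
    by (intro exI[of _ "c(l := q)"]) auto
qed auto

lemma strategy_serves_within:
  assumes "set_systems_ok Q" and "finite P" and "card P = nseq l" and "P \<subseteq> S"
    and "rs \<in> set_pmf (strategy \<beta> Q l P)" and "\<exists>i\<in>{l..<k}. f i \<in> P"
  shows "serves_within k (\<lambda>i. real \<beta> ^ i) S (\<lambda>c. \<forall>j\<in>{l..<k}. c j = f j) rs (cseq \<beta> l)"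
  using assms(2-6)
proof (induction l arbitrary: P rs f)
  case 0
  then obtain p where "P = {p}"
    by (metis card_1_singletonE nseq.simps(1))
  moreover have "rs = [the_elem P]"
    using "0.prems"(4) by simp
  ultimately show ?case
    using "0.prems"(5)
    unfolding serves_within_def valid_schedule_def
    by (intro allI impI exI[of _ "[_]"]) (auto simp: move_cost_def)
next
  case (Suc l)
  let ?w = "\<lambda>i. real \<beta> ^ i"
  let ?QS = "Q (Suc l) P"
  note QS = set_systems_okD[OF assms(1) Suc.prems(1,2)]
  obtain i where i: "i \<in> {Suc l..<k}" "f i \<in> P"
    using Suc.prems(5) by blast
  then obtain q where q: "q \<in> P" "\<forall>A\<in>?QS. f i \<in> A \<or> q \<in> A"
    using QS(5) by blast
  \<comment> \<open>Each set of the system contains \<open>f i\<close> or \<open>q\<close>, which servers \<open>i\<close> and \<open>l\<close> will occupy.\<close>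
  have "serves_within k ?w S (\<lambda>c. \<forall>j\<in>{l..<k}. c j = (f(l := q)) j) rs' (cseq \<beta> l)"
    if rs': "rs' \<in> set_pmf (bind_pmf (pmf_of_set ?QS) (strategy \<beta> Q l))" for rs'
  proof -
    obtain A where A: "A \<in> ?QS" "rs' \<in> set_pmf (strategy \<beta> Q l A)"
      using rs' QS(2,3) by auto
    then have "A \<subseteq> P"
      using QS(1) by auto
    moreover have "\<exists>j\<in>{l..<k}. (f(l := q)) j \<in> A"
      using q(2) A(1) i(1) by (cases "f i \<in> A") (auto intro: bexI[of _ i] bexI[of _ l])
    ultimately show ?thesis
      using Suc.IH[of A rs' "f(l := q)"] A QS(4) Suc.prems(1,3) finite_subset by blast
  qed
  moreover obtain rss where "length rss = \<beta> * ((nseq l + 1) div 2 + 1)"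
      "set rss \<subseteq> set_pmf (bind_pmf (pmf_of_set ?QS) (strategy \<beta> Q l))" "rs = concat rss"
    using set_pmf_rep_pmf Suc.prems(4) by fastforce
  ultimately have "serves_within k ?w S (\<lambda>c. \<forall>j\<in>{l..<k}. c j = (f(l := q)) j) rs
      (real (\<beta> * ((nseq l + 1) div 2 + 1)) * cseq \<beta> l)"
    using serves_within_concat[of rss] by (simp add: subset_iff)
  then have "serves_within k ?w S (\<lambda>c. \<forall>j\<in>{Suc l..<k}. c j = f j) rs
      (real \<beta> ^ l + real (\<beta> * ((nseq l + 1) div 2 + 1)) * cseq \<beta> l)"
    using q(1) Suc.prems(3) by (intro serves_within_park) auto
  then show ?case
    by (simp add: algebra_simps)
qed

lemma adv_stop_not_covered:
  assumes "t < adv_stop S \<omega>"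
  shows "\<not> S \<subseteq> (\<lambda>j. fst (\<omega> !! j)) ` {..t}"
  using assms not_less_Least unfolding adv_stop_def by blast

lemma adv_stop_unmarked:
  assumes "S \<noteq> {}"
  shows "\<exists>q\<in>S. \<forall>j<adv_stop S \<omega>. fst (\<omega> !! j) \<noteq> q"
proof (cases "adv_stop S \<omega>")
  case 0
  with assms show ?thesis by auto
next
  case (Suc t)
  then have "\<not> S \<subseteq> (\<lambda>j. fst (\<omega> !! j)) ` {..t}"
    by (simp add: adv_stop_not_covered)
  then obtain q where "q \<in> S" "q \<notin> (\<lambda>j. fst (\<omega> !! j)) ` {..t}"
    by blast
  with Suc show ?thesis by (intro bexI[of _ q]) (auto simp: less_Suc_eq_le)
qed

lemma set_pmf_adv_round:
  assumes "finite S" and "S \<noteq> {}" and "x \<in> set_pmf (adv_round \<beta> Q k S)"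
  shows "fst x \<in> S" and "snd x \<in> set_pmf (strategy \<beta> Q (k - 1) (S - {fst x}))"
  using assms unfolding adv_round_def by auto

lemma map_pmf_fst_adv_round: "map_pmf fst (adv_round \<beta> Q k S) = pmf_of_set S"
  unfolding adv_round_def by (simp add: map_bind_pmf map_pmf_comp bind_return_pmf')

lemma wks_opt_adv_requests_le:
  assumes "k \<ge> 1" and "finite S" and "card S = nseq (k - 1) + 1" and "set_systems_ok Q"
    and "\<forall>i<k. c0 i \<in> S" and "\<forall>j. \<omega> !! j \<in> set_pmf (adv_round \<beta> Q k S)"
  shows "wks_opt k (\<lambda>i. real \<beta> ^ i) S c0 (adv_requests S \<omega>)
           \<le> real \<beta> ^ (k - 1) + real (adv_stop S \<omega>) * cseq \<beta> (k - 1)"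
proof -
  let ?w = "\<lambda>i. real \<beta> ^ i"
  have "S \<noteq> {}" using assms(3) by auto
  obtain q where q: "q \<in> S" "\<forall>j<adv_stop S \<omega>. fst (\<omega> !! j) \<noteq> q"
    using adv_stop_unmarked[OF \<open>S \<noteq> {}\<close>, of \<omega>] by blast
  let ?I = "\<lambda>c. \<forall>j\<in>{k - 1..<k}. c j = q"
  have "serves_within k ?w S ?I (snd (\<omega> !! j)) (cseq \<beta> (k - 1))"
    if "j < adv_stop S \<omega>" for j
  proof -
    define p where "p = fst (\<omega> !! j)"
    have p: "p \<in> S" "snd (\<omega> !! j) \<in> set_pmf (strategy \<beta> Q (k - 1) (S - {p}))"
      using set_pmf_adv_round[OF assms(2) \<open>S \<noteq> {}\<close> assms(6)[rule_format, of j]]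
      unfolding p_def by simp_all
    have "card (S - {p}) = nseq (k - 1)"
      using p(1) assms(2,3) by simp
    moreover have "\<exists>i\<in>{k - 1..<k}. q \<in> S - {p}"
      using assms(1) q that unfolding p_def by auto
    ultimately show ?thesis
      using strategy_serves_within[OF assms(4) _ _ _ p(2), where k=k and f="\<lambda>_. q"] assms(2) by blast
  qed
  then have "serves_within k ?w S ?I (adv_requests S \<omega>) (real (adv_stop S \<omega>) * cseq \<beta> (k - 1))"
    using serves_within_concat[of "map (\<lambda>j. snd (\<omega> !! j)) [0..<adv_stop S \<omega>]"]
    unfolding adv_requests_def by simp
  then have "serves_within k ?w S (\<lambda>c. \<forall>j\<in>{k - 1..<k}. c j = ((\<lambda>_. q)(k - 1 := q)) j)
      (adv_requests S \<omega>) (real (adv_stop S \<omega>) * cseq \<beta> (k - 1))"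
    by simp
  then have "serves_within k ?w S (\<lambda>c. \<forall>j\<in>{Suc (k - 1)..<k}. c j = q) (adv_requests S \<omega>)
      (real \<beta> ^ (k - 1) + real (adv_stop S \<omega>) * cseq \<beta> (k - 1))"
    by (rule serves_within_park) (simp_all add: q(1))
  then show ?thesis
    using assms(1,5) by (intro wks_opt_le_serves_within) auto
qed

fun cover_round :: "'a set \<Rightarrow> 'a set \<Rightarrow> ('a \<times> 'b) list \<Rightarrow> nat" where
  "cover_round S M [] = 0"
| "cover_round S M (x # xs) =
     (if S \<subseteq> insert (fst x) M then 0 else Suc (cover_round S (insert (fst x) M) xs))"

lemma cover_round_stake_mono: "cover_round S M (stake n \<omega>) \<le> cover_round S M (stake (Suc n) \<omega>)"
  by (induction n arbitrary: M \<omega>) auto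

lemma cover_round_stake_not_covered:
  assumes "\<forall>t<n. \<not> S \<subseteq> M \<union> (\<lambda>j. fst (\<omega> !! j)) ` {..t}"
  shows "cover_round S M (stake n \<omega>) = n"
  using assms
proof (induction n arbitrary: M \<omega>)
  case (Suc n)
  have "(\<lambda>j. fst (\<omega> !! j)) ` {..Suc t} = insert (fst (shd \<omega>)) ((\<lambda>j. fst (stl \<omega> !! j)) ` {..t})" for t
    by (simp add: atMost_Suc_eq_insert_0 image_image)
  then have "\<forall>t<n. \<not> S \<subseteq> insert (fst (shd \<omega>)) M \<union> (\<lambda>j. fst (stl \<omega> !! j)) ` {..t}"
    using Suc.prems by (metis Suc_mono Un_insert_left Un_insert_right)
  moreover have "\<not> S \<subseteq> insert (fst (shd \<omega>)) M"
    using Suc.prems[rule_format, of 0] by simp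
  ultimately show ?case
    using Suc.IH by simp
qed simp

lemma adv_stop_eq_cover_round: "adv_stop S \<omega> = cover_round S {} (stake (adv_stop S \<omega>) \<omega>)"
  using adv_stop_not_covered[of _ S \<omega>] cover_round_stake_not_covered[of "adv_stop S \<omega>" S "{}" \<omega>]
  by simp

lemma cover_round_cong:
  assumes "inj_on h S"
    and "map (\<lambda>x. if fst x \<in> S then Some (h (fst x)) else None) xs
       = map (\<lambda>x. if fst x \<in> S then Some (h (fst x)) else None) ys"
    and "M \<inter> S = M' \<inter> S"
  shows "cover_round S M xs = cover_round S M' ys"
  using assms(2,3)
proof (induction xs arbitrary: ys M M')
  case (Cons x xs)
  then obtain y ys' where ys: "ys = y # ys'"
    by (cases ys) auto
  have "fst x \<in> S \<longleftrightarrow> fst y \<in> S" and "fst x \<in> S \<Longrightarrow> fst x = fst y"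
    using Cons.prems(1) assms(1) ys by (auto split: if_splits dest: inj_onD)
  then have M: "insert (fst x) M \<inter> S = insert (fst y) M' \<inter> S"
    using Cons.prems(2) by (cases "fst x \<in> S") auto
  then have "S \<subseteq> insert (fst x) M \<longleftrightarrow> S \<subseteq> insert (fst y) M'"
    by blast
  moreover have "cover_round S (insert (fst x) M) xs = cover_round S (insert (fst y) M') ys'"
    using Cons.IH[OF _ M, of ys'] Cons.prems(1) ys by simp
  ultimately show ?case
    using ys by simp
qed simp

lemma measurable_cover_round_stake:
  assumes "finite S"
  shows "(\<lambda>\<omega>. cover_round S M (stake n \<omega>))
           \<in> measurable (stream_space (measure_pmf (A :: ('a \<times> 'b) pmf))) (count_space UNIV)"
proof -
  \<comment> \<open>Rounds only matter through their points in the finite set \<open>S\<close>, which can be coded by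
    natural numbers; this makes the countable-alphabet measurability of \<open>stake\<close> applicable.\<close>
  define code :: "'a \<times> 'b \<Rightarrow> nat option" where
    "code x = (if fst x \<in> S then Some (to_nat_on S (fst x)) else None)" for x
  define H where "H zs = cover_round S M (SOME xs. map code xs = zs)" for zs
  have "cover_round S M (stake n \<omega>) = H (stake n (smap code \<omega>))" for \<omega>
  proof -
    have "map code (SOME xs. map code xs = map code (stake n \<omega>)) = map code (stake n \<omega>)"
      by (rule someI_ex) blast
    then show ?thesis
      unfolding H_def stake_smap code_def
      by (intro cover_round_cong[OF inj_on_to_nat_on[OF countable_finite[OF assms]]]) simp_all
  qed
  moreover have "(\<lambda>\<omega>. stake n (smap code \<omega>))
      \<in> measurable (stream_space (measure_pmf A)) (count_space UNIV)"
    by (rule measurable_compose[OF measurable_smap measurable_stake]) simp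
  ultimately show ?thesis
    by simp
qed

lemma borel_measurable_cover_round_stake:
  assumes "finite S"
  shows "(\<lambda>\<omega>. ennreal (real (cover_round S M (stake n \<omega>))))
           \<in> borel_measurable (stream_space (measure_pmf (A :: ('a \<times> 'b) pmf)))"
  by (rule measurable_compose[OF measurable_cover_round_stake[OF assms]]) simp

lemma one_le_of_nat_mult_harm: "n \<ge> 1 \<Longrightarrow> 1 \<le> real n * harm n"
  using harm_mono[of 1 n, where 'a = real] mult_mono[of 1 "real n" 1 "harm n"]
  by (simp add: harm_def)

lemma sum_harm_card_Diff_insert:
  assumes "finite S" and "\<not> S \<subseteq> M"
  shows "(\<Sum>p\<in>S. harm (card (S - insert p M)) :: real) = real (card S) * harm (card (S - M)) - 1"
proof -
  define r where "r = card (S - M)"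
  have "r \<ge> 1"
    using assms unfolding r_def by (simp add: Suc_leI card_gt_0_iff)
  have "(\<Sum>p\<in>S. harm (card (S - insert p M)) :: real)
      = (\<Sum>p\<in>S \<inter> M. harm (card (S - insert p M))) + (\<Sum>p\<in>S - M. harm (card (S - insert p M)))"
    by (rule sum.Int_Diff[OF assms(1)])
  also have "\<dots> = (\<Sum>p\<in>S \<inter> M. harm r) + (\<Sum>p\<in>S - M. harm (r - 1))"
  proof (intro arg_cong2[where f = "(+)"] sum.cong refl)
    fix p
    show "harm (card (S - insert p M)) = harm r" if "p \<in> S \<inter> M"
      using that unfolding r_def by (simp add: insert_absorb)
    assume "p \<in> S - M"
    then have "card ((S - M) - {p}) = r - 1"
      unfolding r_def by (rule card_Diff_singleton)
    moreover have "(S - M) - {p} = S - insert p M"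
      by blast
    ultimately show "harm (card (S - insert p M)) = harm (r - 1)"
      by simp
  qed
  also have "\<dots> = real (card S - r) * harm r + real r * harm (r - 1)"
    using card_Int_Diff[OF assms(1), of M] unfolding r_def by simp
  also have "\<dots> = real (card S) * harm r - 1"
  proof -
    have "harm r = harm (r - 1) + 1 / real r"
      using \<open>r \<ge> 1\<close> harm_Suc[of "r - 1"] by (simp add: divide_inverse)
    moreover have "r \<le> card S"
      using assms(1) unfolding r_def by (simp add: card_mono)
    ultimately show ?thesis
      using \<open>r \<ge> 1\<close> by (simp add: of_nat_diff field_simps)
  qed
  finally show ?thesis
    unfolding r_def .
qed

lemma nn_integral_cover_round_Cons_le:
  fixes A :: "('a \<times> 'b) pmf"
  assumes "finite S"
    and "(\<integral>\<^sup>+\<omega>. ennreal (real (cover_round S (insert (fst x) M) (stake n \<omega>))) \<partial>stream_space (measure_pmf A))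
           \<le> ennreal (real (card S) * harm (card (S - insert (fst x) M)) - 1)"
  shows "(\<integral>\<^sup>+\<omega>. ennreal (real (cover_round S M (stake (Suc n) (x ## \<omega>)))) \<partial>stream_space (measure_pmf A))
           \<le> ennreal (real (card S) * harm (card (S - insert (fst x) M)))"
proof (cases "S \<subseteq> insert (fst x) M")
  case False
  let ?SS = "stream_space (measure_pmf A)"
  let ?g = "real (card S) * harm (card (S - insert (fst x) M))"
  interpret SS: prob_space ?SS
    by (rule prob_space.prob_space_stream_space[OF measure_pmf.prob_space_axioms])
  from False have "1 \<le> card (S - insert (fst x) M)"
    using assms(1) by (simp add: Suc_leI card_gt_0_iff)
  then have "1 \<le> real (card (S - insert (fst x) M)) * harm (card (S - insert (fst x) M))"
    by (rule one_le_of_nat_mult_harm)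
  also have "\<dots> \<le> ?g"
    using assms(1) by (intro mult_right_mono of_nat_mono card_mono) (auto simp: harm_nonneg)
  finally have "1 \<le> ?g" .
  have "(\<integral>\<^sup>+\<omega>. ennreal (real (cover_round S M (stake (Suc n) (x ## \<omega>)))) \<partial>?SS)
      = (\<integral>\<^sup>+\<omega>. 1 + ennreal (real (cover_round S (insert (fst x) M) (stake n \<omega>))) \<partial>?SS)"
    using False by (intro nn_integral_cong) (simp add: ennreal_plus[symmetric] add.commute)
  also have "\<dots> = 1 + (\<integral>\<^sup>+\<omega>. ennreal (real (cover_round S (insert (fst x) M) (stake n \<omega>))) \<partial>?SS)"
    by (simp add: nn_integral_add borel_measurable_cover_round_stake[OF assms(1)] SS.emeasure_space_1)
  also have "\<dots> \<le> 1 + ennreal (?g - 1)"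
    using assms(2) by (rule add_left_mono)
  also have "\<dots> = ennreal ?g"
    using \<open>1 \<le> ?g\<close> ennreal_plus[of 1 "?g - 1"] by simp
  finally show ?thesis .
qed simp

lemma nn_integral_cover_round_le:
  assumes "finite S" and "S \<noteq> {}" and "map_pmf fst A = pmf_of_set S"
  shows "(\<integral>\<^sup>+\<omega>. ennreal (real (cover_round S M (stake n \<omega>))) \<partial>stream_space (measure_pmf A))
           \<le> ennreal (real (card S) * harm (card (S - M)) - 1)"
proof (induction n arbitrary: M)
  case (Suc n)
  let ?SS = "stream_space (measure_pmf A)"
  let ?g = "\<lambda>p. real (card S) * harm (card (S - insert p M))"
  show ?case
  proof (cases "S \<subseteq> M")
    case False
    have "(\<integral>\<^sup>+\<omega>. ennreal (real (cover_round S M (stake (Suc n) \<omega>))) \<partial>?SS)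
        = (\<integral>\<^sup>+x. (\<integral>\<^sup>+\<omega>. ennreal (real (cover_round S M (stake (Suc n) (x ## \<omega>)))) \<partial>?SS) \<partial>measure_pmf A)"
      by (rule prob_space.nn_integral_stream_space[OF measure_pmf.prob_space_axioms
          borel_measurable_cover_round_stake[OF assms(1)]])
    also have "\<dots> \<le> (\<integral>\<^sup>+x. ennreal (?g (fst x)) \<partial>measure_pmf A)"
      using nn_integral_cover_round_Cons_le[OF assms(1) Suc.IH] by (rule nn_integral_mono)
    also have "\<dots> = (\<integral>\<^sup>+p. ennreal (?g p) \<partial>measure_pmf (pmf_of_set S))"
      by (simp flip: assms(3))
    also have "\<dots> = ennreal ((\<Sum>p\<in>S. ?g p) / real (card S))"
      using assms(1,2)
      by (simp add: nn_integral_pmf_of_set sum_ennreal harm_nonneg ennreal_of_nat_eq_real_of_nat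
          divide_ennreal sum_nonneg card_gt_0_iff)
    also have "(\<Sum>p\<in>S. ?g p) / real (card S) = real (card S) * harm (card (S - M)) - 1"
      using sum_harm_card_Diff_insert[OF assms(1) False] assms(1,2)
      by (simp add: sum_distrib_left[symmetric])
    finally show ?thesis .
  qed (simp add: subset_insertI2)
qed simp

definition stream_cover_round :: "'a set \<Rightarrow> ('a \<times> 'b) stream \<Rightarrow> ennreal" where
  "stream_cover_round S \<omega> = (SUP n. ennreal (real (cover_round S {} (stake n \<omega>))))"

lemma adv_stop_le_stream_cover_round: "ennreal (real (adv_stop S \<omega>)) \<le> stream_cover_round S \<omega>"
  unfolding stream_cover_round_def by (subst adv_stop_eq_cover_round) (rule SUP_upper, simp)

lemma borel_measurable_stream_cover_round:
  assumes "finite S"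
  shows "stream_cover_round S \<in> borel_measurable (stream_space (measure_pmf A))"
  unfolding stream_cover_round_def
  by (rule borel_measurable_SUP) (simp_all add: borel_measurable_cover_round_stake[OF assms])

lemma nn_integral_stream_cover_round_le:
  assumes "finite S" and "S \<noteq> {}" and "map_pmf fst A = pmf_of_set S"
  shows "(\<integral>\<^sup>+\<omega>. stream_cover_round S \<omega> \<partial>stream_space (measure_pmf A))
           \<le> ennreal (real (card S) * harm (card S) - 1)"
proof -
  have "(\<integral>\<^sup>+\<omega>. stream_cover_round S \<omega> \<partial>stream_space (measure_pmf A))
      = (SUP n. \<integral>\<^sup>+\<omega>. ennreal (real (cover_round S {} (stake n \<omega>))) \<partial>stream_space (measure_pmf A))"
    unfolding stream_cover_round_def
  proof (rule nn_integral_monotone_convergence_SUP)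
    show "incseq (\<lambda>n \<omega>. ennreal (real (cover_round S {} (stake n \<omega>))))"
      by (intro incseq_SucI le_funI ennreal_leI of_nat_mono cover_round_stake_mono)
  qed (rule borel_measurable_cover_round_stake[OF assms(1)])
  also have "\<dots> \<le> ennreal (real (card S) * harm (card S) - 1)"
    using nn_integral_cover_round_le[OF assms, of "{}"] by (simp add: SUP_least)
  finally show ?thesis .
qed

lemma cseq_nonneg: "cseq \<beta> l \<ge> 0"
  by (induction l) auto

lemma AE_wks_opt_adv_requests_le:
  assumes "k \<ge> 1" and "finite S" and "card S = nseq (k - 1) + 1" and "set_systems_ok Q"
    and "\<forall>i<k. c0 i \<in> S"
  shows "AE \<omega> in stream_space (measure_pmf (adv_round \<beta> Q k S)).
           ennreal (wks_opt k (\<lambda>i. real \<beta> ^ i) S c0 (adv_requests S \<omega>))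
             \<le> ennreal (real \<beta> ^ (k - 1)) + ennreal (cseq \<beta> (k - 1)) * stream_cover_round S \<omega>"
proof -
  have "AE \<omega> in stream_space (measure_pmf (adv_round \<beta> Q k S)).
          stream_all (\<lambda>x. x \<in> set_pmf (adv_round \<beta> Q k S)) \<omega>"
    by (rule prob_space.AE_stream_all[OF measure_pmf.prob_space_axioms]) (simp_all add: AE_measure_pmf)
  then show ?thesis
  proof (rule AE_mp[OF _ AE_I2], intro impI)
    fix \<omega>
    assume "stream_all (\<lambda>x. x \<in> set_pmf (adv_round \<beta> Q k S)) \<omega>"
    then have "wks_opt k (\<lambda>i. real \<beta> ^ i) S c0 (adv_requests S \<omega>)
        \<le> real \<beta> ^ (k - 1) + cseq \<beta> (k - 1) * real (adv_stop S \<omega>)"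
      using wks_opt_adv_requests_le[OF assms] by (simp add: stream_all_def mult.commute)
    then have "ennreal (wks_opt k (\<lambda>i. real \<beta> ^ i) S c0 (adv_requests S \<omega>))
        \<le> ennreal (real \<beta> ^ (k - 1)) + ennreal (cseq \<beta> (k - 1)) * ennreal (real (adv_stop S \<omega>))"
      using cseq_nonneg[of \<beta> "k - 1"]
      by (simp add: ennreal_leI ennreal_plus[symmetric] ennreal_mult[symmetric]
          del: ennreal_plus ennreal_of_nat_eq_real_of_nat)
    also have "\<dots> \<le> ennreal (real \<beta> ^ (k - 1)) + ennreal (cseq \<beta> (k - 1)) * stream_cover_round S \<omega>"
      by (intro add_left_mono mult_left_mono adv_stop_le_stream_cover_round) simp
    finally show "ennreal (wks_opt k (\<lambda>i. real \<beta> ^ i) S c0 (adv_requests S \<omega>))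
        \<le> ennreal (real \<beta> ^ (k - 1)) + ennreal (cseq \<beta> (k - 1)) * stream_cover_round S \<omega>" .
  qed
qed

theorem lemma7:
  fixes k \<beta> :: nat and S :: "'a set" and Q :: "nat \<Rightarrow> 'a set \<Rightarrow> 'a set set"
    and c0 :: "nat \<Rightarrow> 'a"
  assumes "k \<ge> 1" and "\<beta> \<ge> 1"
    and "finite S" and "card S = nseq (k - 1) + 1"
    and "set_systems_ok Q"
    and "\<forall>i<k. c0 i \<in> S"
  shows "(\<integral>\<^sup>+ \<omega>. ennreal (wks_opt k (\<lambda>i. real \<beta> ^ i) S c0 (adv_requests S \<omega>))
            \<partial>stream_space (measure_pmf (adv_round \<beta> Q k S)))
         \<le> ennreal (real \<beta> ^ (k - 1)
              + (real (nseq (k - 1) + 1) * harm (nseq (k - 1) + 1) - 1) * cseq \<beta> (k - 1))"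
proof -
  let ?SS = "stream_space (measure_pmf (adv_round \<beta> Q k S))"
  let ?a = "real \<beta> ^ (k - 1)" and ?C = "cseq \<beta> (k - 1)"
  let ?H = "real (card S) * harm (card S) - 1"
  interpret SS: prob_space ?SS
    by (rule prob_space.prob_space_stream_space[OF measure_pmf.prob_space_axioms])
  have "S \<noteq> {}" and "?H \<ge> 0"
    using assms(4) one_le_of_nat_mult_harm[of "card S"] by auto
  have "(\<integral>\<^sup>+\<omega>. ennreal (wks_opt k (\<lambda>i. real \<beta> ^ i) S c0 (adv_requests S \<omega>)) \<partial>?SS)
      \<le> (\<integral>\<^sup>+\<omega>. ennreal ?a + ennreal ?C * stream_cover_round S \<omega> \<partial>?SS)"
    using AE_wks_opt_adv_requests_le[OF assms(1,3-6)] by (rule nn_integral_mono_AE)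
  also have "\<dots> = ennreal ?a + ennreal ?C * (\<integral>\<^sup>+\<omega>. stream_cover_round S \<omega> \<partial>?SS)"
    using borel_measurable_stream_cover_round[OF assms(3), of "adv_round \<beta> Q k S"]
    by (simp add: nn_integral_add nn_integral_cmult SS.emeasure_space_1)
  also have "\<dots> \<le> ennreal ?a + ennreal ?C * ennreal ?H"
    using nn_integral_stream_cover_round_le[OF assms(3) \<open>S \<noteq> {}\<close> map_pmf_fst_adv_round]
    by (intro add_left_mono mult_left_mono) simp_all
  also have "\<dots> = ennreal (?a + ?H * ?C)"
    using cseq_nonneg \<open>?H \<ge> 0\<close> by (simp add: ennreal_plus ennreal_mult mult.commute)
  finally show ?thesis
    using assms(4) by simp
qed

end
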